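(* Let $K$ be any field. The Lie superalgebra $\mathbf Q=\mathrm{Lie}(v_0,v_1,v_2)$ is not hereditary just infinite: there is an ideal of finite codimension in $\mathbf Q$ which is not just infinite (it has a nonzero ideal of infinite codimension).
   Context: $\Lambda$ is the Grassmann algebra over $K$ on odd generators $x_0,x_1,\dots$; $x_i$ is identified with left multiplication; $\partial_i$ is the odd superderivation with $\partial_i(x_j)=\delta_{ij}$; pivot elements $v_i=\sum_{k\ge0}\big(\prod_{n=0}^{k-1}x_{i+3n}x_{i+3n+1}\big)\partial_{i+3k}$. $\mathbf Q$ is the Lie subsuperalgebra of $(\operatorname{End}\Lambda)^{(-)}$ generated by $v_0,v_1,v_2$ (closed also under squaring of odd elements when $\operatorname{char}K=2$). An algebra is just infinite if it is infinite-dimensional and every nonzero ideal has finite codimension; it is hereditary just infinite if every ideal of finite codimension is just infinite. *)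

theory Defs
  imports "HOL-Library.Poly_Mapping" "HOL-Library.FSet"
begin

text \<open>Lambda is the K-vector space with basis the monomials x_T = x_t1 x_t2 ... x_tk
  (t1 < ... < tk) indexed by finite sets T of naturals.  An element is a finitely
  supported coefficient function.\<close>

type_synonym 'k grass = "nat fset \<Rightarrow>\<^sub>0 'k"
type_synonym 'k gop = "'k grass \<Rightarrow> 'k grass"

definition gmono :: "nat fset \<Rightarrow> 'k::field grass" where
  "gmono T = Poly_Mapping.single T 1"

definition gsmult :: "'k::field \<Rightarrow> 'k grass \<Rightarrow> 'k grass" where
  "gsmult c f = Poly_Mapping.map (\<lambda>a. c * a) f"

definition lin_ext :: "(nat fset \<Rightarrow> 'k::field grass) \<Rightarrow> 'k gop" where
  "lin_ext g f = (\<Sum>T\<in>Poly_Mapping.keys f. gsmult (Poly_Mapping.lookup f T) (g T))"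

text \<open>Sign obtained by moving an odd generator x_i past the generators x_t, t in T, t < i.\<close>
definition gsign :: "nat \<Rightarrow> nat fset \<Rightarrow> 'k::field" where
  "gsign i T = (-1) ^ card {t \<in> fset T. t < i}"

text \<open>Left multiplication by x_i.\<close>
definition xop :: "nat \<Rightarrow> 'k::field gop" where
  "xop i = lin_ext (\<lambda>T. if i |\<in>| T then 0 else gsmult (gsign i T) (gmono (finsert i T)))"

text \<open>The odd superderivation d_i with d_i(x_j) = delta_ij.\<close>
definition dop :: "nat \<Rightarrow> 'k::field gop" where
  "dop i = lin_ext (\<lambda>T. if i |\<in>| T then gsmult (gsign i T) (gmono (T |-| {|i|})) else 0)"

definition pairprod :: "nat \<Rightarrow> nat \<Rightarrow> 'k::field gop" where
  "pairprod i k = foldr (\<lambda>n g. xop (i + 3*n) \<circ> xop (i + 3*n + 1) \<circ> g) [0..<k] id"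

text \<open>Pivot element v_i = sum_k (prod_{n<k} x_{i+3n} x_{i+3n+1}) d_{i+3k}.  On a basis
  monomial x_T only the terms with i+3k in T are nonzero, so the sum is finite.\<close>
definition pivot :: "nat \<Rightarrow> 'k::field gop" where
  "pivot i = lin_ext (\<lambda>T. \<Sum>k\<in>{k. i + 3*k |\<in>| T}. pairprod i k (dop (i + 3*k) (gmono T)))"

definition op_linear :: "'k::field gop \<Rightarrow> bool" where
  "op_linear A \<longleftrightarrow> (\<forall>f g. A (f + g) = A f + A g) \<and> (\<forall>c f. A (gsmult c f) = gsmult c (A f))"

definition op_zero :: "'k::field gop" where "op_zero = (\<lambda>f. 0)"
definition op_add :: "'k::field gop \<Rightarrow> 'k gop \<Rightarrow> 'k gop" where "op_add A B = (\<lambda>f. A f + B f)"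
definition op_smult :: "'k::field \<Rightarrow> 'k gop \<Rightarrow> 'k gop" where "op_smult c A = (\<lambda>f. gsmult c (A f))"

text \<open>Homogeneity: A is homogeneous of parity p (False = even, True = odd) if it maps
  each monomial of parity q into the span of monomials of parity q + p.\<close>
definition homog :: "bool \<Rightarrow> 'k::field gop \<Rightarrow> bool" where
  "homog p A \<longleftrightarrow> (\<forall>T S. Poly_Mapping.lookup (A (gmono T)) S \<noteq> 0 \<longrightarrow> (odd (fcard S + fcard T) \<longleftrightarrow> p))"

text \<open>Super commutator of homogeneous A (parity p), B (parity q):
  [A,B] = AB - (-1)^{pq} BA.\<close>
definition sbr :: "bool \<Rightarrow> bool \<Rightarrow> 'k::field gop \<Rightarrow> 'k gop \<Rightarrow> 'k gop" where
  "sbr p q A B = op_add (A \<circ> B) (op_smult (if p \<and> q then 1 else -1) (B \<circ> A))"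

definition op_span :: "'k::field gop set \<Rightarrow> 'k gop set" where
  "op_span F = {(\<lambda>f. \<Sum>A\<in>G. gsmult (c A) (A f)) | G c. finite G \<and> G \<subseteq> F}"

definition subspace_op :: "'k::field gop set \<Rightarrow> bool" where
  "subspace_op L \<longleftrightarrow> (\<forall>A\<in>L. op_linear A) \<and> op_zero \<in> L \<and>
     (\<forall>A\<in>L. \<forall>B\<in>L. op_add A B \<in> L) \<and> (\<forall>c. \<forall>A\<in>L. op_smult c A \<in> L)"

definition graded :: "'k::field gop set \<Rightarrow> bool" where
  "graded L \<longleftrightarrow> (\<forall>A\<in>L. \<exists>B\<in>L. \<exists>C\<in>L. homog False B \<and> homog True C \<and> A = op_add B C)"

definition lie_subsuper :: "'k::field gop set \<Rightarrow> bool" where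
  "lie_subsuper L \<longleftrightarrow> subspace_op L \<and> graded L \<and>
     (\<forall>A\<in>L. \<forall>B\<in>L. \<forall>p q. homog p A \<longrightarrow> homog q B \<longrightarrow> sbr p q A B \<in> L) \<and>
     ((2::'k) = 0 \<longrightarrow> (\<forall>A\<in>L. homog True A \<longrightarrow> A \<circ> A \<in> L))"

definition Qalg :: "'k::field gop set" where
  "Qalg = \<Inter>{L. lie_subsuper L \<and> pivot 0 \<in> L \<and> pivot 1 \<in> L \<and> pivot 2 \<in> L}"

definition is_ideal :: "'k::field gop set \<Rightarrow> 'k gop set \<Rightarrow> bool" where
  "is_ideal J I \<longleftrightarrow> I \<subseteq> J \<and> subspace_op I \<and> graded I \<and>
     (\<forall>A\<in>J. \<forall>B\<in>I. \<forall>p q. homog p A \<longrightarrow> homog q B \<longrightarrow> sbr p q A B \<in> I) \<and>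
     ((2::'k) = 0 \<longrightarrow> (\<forall>B\<in>I. homog True B \<longrightarrow> B \<circ> B \<in> I))"

definition fin_codim :: "'k::field gop set \<Rightarrow> 'k gop set \<Rightarrow> bool" where
  "fin_codim J I \<longleftrightarrow> (\<exists>F. finite F \<and> F \<subseteq> J \<and> J \<subseteq> {op_add B C | B C. B \<in> I \<and> C \<in> op_span F})"

definition just_infinite :: "'k::field gop set \<Rightarrow> bool" where
  "just_infinite J \<longleftrightarrow> \<not> fin_codim J {op_zero} \<and>
     (\<forall>I. is_ideal J I \<and> I \<noteq> {op_zero} \<longrightarrow> fin_codim J I)"

definition hereditary_just_infinite :: "'k::field gop set \<Rightarrow> bool" where
  "hereditary_just_infinite J \<longleftrightarrow> (\<forall>I. is_ideal J I \<and> fin_codim J I \<longrightarrow> just_infinite I)"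

end

theory Submission
  imports Defs "HOL-Library.Function_Algebras" "HOL.Vector_Spaces"
begin

(*
  Every homogeneous element A of Q has scalar supercommutators [A, x_j] with x_0, x_1, x_2:
  this holds for the generators v_0, v_1, v_2 and is preserved by brackets, which by the
  super Jacobi identity even supercommute with x_0, x_1, x_2 (as do squares of odd elements).
  Hence the elements of Q supercommuting with x_0, x_1, x_2 form an ideal J with
  Q = J + span {v_0, v_1, v_2}. Elements of J preserve x_0 x_1 x_2 Lambda, so those mapping
  Lambda into x_0 x_1 x_2 Lambda form an ideal I of J. It contains
  [[v_0, v_1], v_1] = x_0 x_1 x_2 x_3 v_6 \<noteq> 0, but has infinite codimension in J: taking the
  constant terms of A x_0, A x_1, ... is a linear map vanishing on I that sends the pivots
  v_n \<in> J, n \<ge> 3, to linearly independent unit vectors.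
*)

lemma lookup_gsmult [simp]: "Poly_Mapping.lookup (gsmult c f) S = c * Poly_Mapping.lookup f S"
  unfolding gsmult_def by transfer (simp add: when_def)

lemma lookup_gmono: "Poly_Mapping.lookup (gmono T) S = (if S = T then 1 else 0)"
  unfolding gmono_def by (simp add: lookup_single)

lemma gsmult_add: "gsmult c (f + g) = gsmult c f + gsmult c g"
  by (rule poly_mapping_eqI) (simp add: lookup_add algebra_simps)

lemma gsmult_add_left: "gsmult (c + d) f = gsmult c f + gsmult d f"
  by (rule poly_mapping_eqI) (simp add: lookup_add algebra_simps)

lemma gsmult_diff: "gsmult c (f - g) = gsmult c f - gsmult c g"
  by (rule poly_mapping_eqI) (simp add: lookup_minus algebra_simps)

lemma gsmult_minus: "gsmult c (- f) = - gsmult c f"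
  by (rule poly_mapping_eqI) simp

lemma gsmult_minus_left: "gsmult (- c) f = - gsmult c f"
  by (rule poly_mapping_eqI) simp

lemma gsmult_sum: "gsmult c (sum h K) = (\<Sum>x\<in>K. gsmult c (h x))"
  by (rule poly_mapping_eqI) (simp add: lookup_sum sum_distrib_left)

lemma gsmult_sum_left: "gsmult (sum c K) f = (\<Sum>x\<in>K. gsmult (c x) f)"
  by (rule poly_mapping_eqI) (simp add: lookup_sum sum_distrib_right)

lemma gsmult_gsmult [simp]: "gsmult c (gsmult d f) = gsmult (c * d) f"
  and gsmult_one [simp]: "gsmult 1 f = f"
  and gsmult_minus_one [simp]: "gsmult (-1) f = - f"
  and gsmult_zero_left [simp]: "gsmult 0 f = 0"
  and gsmult_zero_right [simp]: "gsmult c 0 = 0"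
  by (rule poly_mapping_eqI; simp)+

lemma grass_expand: "f = (\<Sum>T\<in>Poly_Mapping.keys f. gsmult (Poly_Mapping.lookup f T) (gmono T))"
proof (rule poly_mapping_eqI)
  fix S
  have "(\<Sum>T\<in>Poly_Mapping.keys f. Poly_Mapping.lookup f T * Poly_Mapping.lookup (gmono T) S)
      = (\<Sum>T\<in>Poly_Mapping.keys f. if T = S then Poly_Mapping.lookup f S else 0)"
    by (rule sum.cong) (auto simp: lookup_gmono)
  then show "Poly_Mapping.lookup f S
      = Poly_Mapping.lookup (\<Sum>T\<in>Poly_Mapping.keys f. gsmult (Poly_Mapping.lookup f T) (gmono T)) S"
    by (simp add: lookup_sum in_keys_iff)
qed

lemma lin_ext_superset:
  assumes "finite K" "Poly_Mapping.keys f \<subseteq> K"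
  shows "lin_ext g f = (\<Sum>T\<in>K. gsmult (Poly_Mapping.lookup f T) (g T))"
  unfolding lin_ext_def
  by (rule sum.mono_neutral_left) (use assms in \<open>auto simp: in_keys_iff\<close>)

lemma op_linear_lin_ext: "op_linear (lin_ext g)"
  unfolding op_linear_def
proof (intro conjI allI)
  fix f1 f2 :: "'a grass"
  let ?K = "Poly_Mapping.keys f1 \<union> Poly_Mapping.keys f2"
  show "lin_ext g (f1 + f2) = lin_ext g f1 + lin_ext g f2"
    using lin_ext_superset[of ?K f1 g] lin_ext_superset[of ?K f2 g]
      lin_ext_superset[of ?K "f1 + f2" g] keys_add[of f1 f2]
    by (simp add: lookup_add gsmult_add_left sum.distrib)
next
  fix c and f :: "'a grass"
  have "Poly_Mapping.keys (gsmult c f) \<subseteq> Poly_Mapping.keys f"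
    by (auto simp: in_keys_iff)
  then show "lin_ext g (gsmult c f) = gsmult c (lin_ext g f)"
    using lin_ext_superset[of "Poly_Mapping.keys f" "gsmult c f" g]
    by (simp add: lin_ext_def gsmult_sum)
qed

lemma lin_ext_gmono [simp]: "lin_ext g (gmono T) = g T"
proof -
  have "lin_ext g (gmono T) = (\<Sum>S\<in>{T}. gsmult (Poly_Mapping.lookup (gmono T) S) (g S))"
    by (rule lin_ext_superset) (auto simp: in_keys_iff lookup_gmono split: if_splits)
  then show ?thesis by (simp add: lookup_gmono)
qed

context
  fixes A :: "'k::field gop"
  assumes A: "op_linear A"
begin

lemma op_linear_add: "A (f + g) = A f + A g"
  and op_linear_gsmult: "A (gsmult c f) = gsmult c (A f)"
  using A unfolding op_linear_def by blast+

lemma op_linear_zero: "A 0 = 0"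
  using op_linear_gsmult[of 0 0] by simp

lemma op_linear_minus: "A (- f) = - A f"
  using op_linear_gsmult[of "-1" f] by simp

lemma op_linear_diff: "A (f - g) = A f - A g"
  using op_linear_add[of f "- g"] by (simp add: op_linear_minus)

lemma op_linear_sum: "A (sum h K) = (\<Sum>x\<in>K. A (h x))"
  by (induction K rule: infinite_finite_induct) (auto simp: op_linear_zero op_linear_add)

lemma op_linear_expand:
  "A f = (\<Sum>T\<in>Poly_Mapping.keys f. gsmult (Poly_Mapping.lookup f T) (A (gmono T)))"
  using arg_cong[OF grass_expand[of f], of A] by (simp only: op_linear_sum op_linear_gsmult)

lemma op_linear_lookup_nonzero:
  assumes "Poly_Mapping.lookup (A f) S \<noteq> 0"
  obtains T where "Poly_Mapping.lookup f T \<noteq> 0" "Poly_Mapping.lookup (A (gmono T)) S \<noteq> 0"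
proof -
  have "(\<Sum>T\<in>Poly_Mapping.keys f. Poly_Mapping.lookup f T * Poly_Mapping.lookup (A (gmono T)) S) \<noteq> 0"
    using assms by (subst (asm) op_linear_expand) (simp add: lookup_sum)
  then obtain T where "T \<in> Poly_Mapping.keys f" "Poly_Mapping.lookup (A (gmono T)) S \<noteq> 0"
    by (metis (no_types, lifting) mult_zero_right sum.neutral)
  then show thesis using that by (auto simp: in_keys_iff)
qed

end

lemma op_linear_eqI:
  assumes "op_linear A" "op_linear B" "\<And>T. A (gmono T) = B (gmono T)"
  shows "A f = B f"
  using op_linear_expand[OF assms(1), of f] op_linear_expand[OF assms(2), of f] assms(3) by simp

lemma op_linear_id: "op_linear (\<lambda>f. f)"
  and op_linear_const_zero: "op_linear (\<lambda>f. 0)"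
  unfolding op_linear_def by auto

lemma op_linear_comp: "op_linear A \<Longrightarrow> op_linear B \<Longrightarrow> op_linear (\<lambda>f. A (B f))"
  unfolding op_linear_def by auto

lemma op_linear_plus: "op_linear A \<Longrightarrow> op_linear B \<Longrightarrow> op_linear (\<lambda>f. A f + B f)"
  unfolding op_linear_def by (auto simp: gsmult_add)

lemma op_linear_diff_op: "op_linear A \<Longrightarrow> op_linear B \<Longrightarrow> op_linear (\<lambda>f. A f - B f)"
  unfolding op_linear_def by (auto simp: gsmult_diff)

lemma op_linear_uminus: "op_linear A \<Longrightarrow> op_linear (\<lambda>f. - A f)"
  unfolding op_linear_def by (auto simp: gsmult_minus)

lemma op_linear_scaled: "op_linear A \<Longrightarrow> op_linear (\<lambda>f. gsmult c (A f))"
  unfolding op_linear_def by (auto simp: gsmult_add mult.commute)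

lemma op_add_apply: "op_add A B f = A f + B f"
  and op_smult_apply: "op_smult c A f = gsmult c (A f)"
  and op_zero_apply: "op_zero f = 0"
  unfolding op_add_def op_smult_def op_zero_def by simp_all

lemma op_add_op_zero [simp]: "op_add A op_zero = A" "op_add op_zero A = A"
  unfolding op_add_def op_zero_def by simp_all

lemma op_add_swap: "op_add (op_add A B) (op_add C D) = op_add (op_add A C) (op_add B D)"
  unfolding op_add_def by (simp add: algebra_simps)

lemma op_smult_op_add: "op_smult c (op_add A B) = op_add (op_smult c A) (op_smult c B)"
  unfolding op_add_def op_smult_def by (simp add: gsmult_add)

lemma op_sum_empty: "(\<lambda>f. \<Sum>i\<in>{}. A i f) = op_zero"
  and op_sum_insert: "finite K \<Longrightarrow> k \<notin> K \<Longrightarrow>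
    (\<lambda>f. \<Sum>i\<in>insert k K. A i f) = op_add (A k) (\<lambda>f. \<Sum>i\<in>K. A i f)"
  unfolding op_zero_def op_add_def by simp_all

lemma op_span_sum:
  assumes "finite K" "A ` K \<subseteq> F"
  shows "(\<lambda>f. \<Sum>i\<in>K. gsmult (c i) (A i f)) \<in> op_span F"
proof -
  let ?d = "\<lambda>B. \<Sum>i\<in>{i \<in> K. A i = B}. c i"
  have "(\<Sum>i\<in>K. gsmult (c i) (A i f)) = (\<Sum>B\<in>A ` K. gsmult (?d B) (B f))" for f
  proof -
    have "(\<Sum>i\<in>K. gsmult (c i) (A i f)) = (\<Sum>B\<in>A ` K. \<Sum>i\<in>{i \<in> K. A i = B}. gsmult (c i) (A i f))"
      by (rule sum.image_gen[OF assms(1)])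
    also have "\<dots> = (\<Sum>B\<in>A ` K. gsmult (?d B) (B f))"
      by (intro sum.cong refl) (simp add: gsmult_sum_left)
    finally show ?thesis .
  qed
  then have "(\<lambda>f. \<Sum>i\<in>K. gsmult (c i) (A i f)) = (\<lambda>f. \<Sum>B\<in>A ` K. gsmult (?d B) (B f))"
    by (rule ext)
  then show ?thesis
    unfolding op_span_def mem_Collect_eq using assms
    by (intro exI[of _ "A ` K"] exI[of _ ?d] conjI) simp_all
qed

section \<open>Odd generators and odd derivations\<close>

lemma gsign_square [simp]: "gsign i T * gsign i T = (1::'k::field)"
  unfolding gsign_def by (simp add: power_mult_distrib[symmetric])

lemma gsign_finsert:
  assumes "j |\<notin>| T"
  shows "gsign i (finsert j T) = (if j < i then - gsign i T else (gsign i T :: 'k::field))"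
proof -
  have split: "{t \<in> fset (finsert j T). t < i}
      = (if j < i then insert j {t \<in> fset T. t < i} else {t \<in> fset T. t < i})"
    by auto
  have "j \<notin> {t \<in> fset T. t < i}" "finite {t \<in> fset T. t < i}" using assms by auto
  then show ?thesis unfolding gsign_def split by auto
qed

lemma gsign_fminus:
  assumes "j |\<in>| T"
  shows "gsign i (T |-| {|j|}) = (if j < i then - gsign i T else (gsign i T :: 'k::field))"
proof -
  have "finsert j (T |-| {|j|}) = T" "j |\<notin>| T |-| {|j|}" using assms by auto
  then have "gsign i T = (if j < i then - gsign i (T |-| {|j|}) else (gsign i (T |-| {|j|}) :: 'k))"
    using gsign_finsert[of j "T |-| {|j|}" i] by simp
  then show ?thesis by (cases "j < i") simp_all
qed

lemma gsign_finsert_self [simp]: "gsign i (finsert i T) = gsign i T"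
  unfolding gsign_def by (rule arg_cong[where f="\<lambda>n. (-1) ^ card n"]) auto

lemma gsign_fminus_self [simp]: "gsign i (T |-| {|i|}) = gsign i T"
  unfolding gsign_def by (rule arg_cong[where f="\<lambda>n. (-1) ^ card n"]) auto

lemma op_linear_xop: "op_linear (xop j)"
  and op_linear_dop: "op_linear (dop j)"
  unfolding xop_def dop_def by (rule op_linear_lin_ext)+

lemma xop_gmono:
  "xop j (gmono T) = (if j |\<in>| T then 0 else gsmult (gsign j T) (gmono (finsert j T)))"
  unfolding xop_def by simp

lemma dop_gmono:
  "dop j (gmono T) = (if j |\<in>| T then gsmult (gsign j T) (gmono (T |-| {|j|})) else 0)"
  unfolding dop_def by simp

lemmas xop_add = op_linear_add[OF op_linear_xop]
  and xop_gsmult = op_linear_gsmult[OF op_linear_xop]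
  and xop_zero [simp] = op_linear_zero[OF op_linear_xop]
  and xop_minus = op_linear_minus[OF op_linear_xop]
  and xop_diff = op_linear_diff[OF op_linear_xop]
  and xop_sum = op_linear_sum[OF op_linear_xop]

lemmas dop_add = op_linear_add[OF op_linear_dop]
  and dop_gsmult = op_linear_gsmult[OF op_linear_dop]
  and dop_zero [simp] = op_linear_zero[OF op_linear_dop]

lemma xop_xop_same: "xop i (xop i f) = (0::'k::field grass)"
  by (rule op_linear_eqI[OF op_linear_comp[OF op_linear_xop op_linear_xop] op_linear_const_zero,
        simplified]) (simp add: xop_gmono xop_gsmult)

lemma xop_xop_anticomm: "xop i (xop j f) = - xop j (xop i (f::'k::field grass))"
proof (rule op_linear_eqI[OF op_linear_comp[OF op_linear_xop op_linear_xop]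
      op_linear_uminus[OF op_linear_comp[OF op_linear_xop op_linear_xop]], simplified])
  fix T
  show "xop i (xop j (gmono T)) = - xop j (xop i (gmono T :: 'k grass))"
  proof (cases "i = j \<or> i |\<in>| T \<or> j |\<in>| T")
    case True
    then show ?thesis by (auto simp: xop_gmono xop_gsmult)
  next
    case False
    have "finsert i (finsert j T) = finsert j (finsert i T)" by auto
    with False show ?thesis
      by (simp add: xop_gmono xop_gsmult gsign_finsert mult.commute flip: gsmult_minus_left)
  qed
qed

lemma xop_xop_xop_comm: "xop a (xop b (xop j h)) = xop j (xop a (xop b h))"
  by (simp add: xop_xop_anticomm[of b j] xop_xop_anticomm[of a j] xop_minus)

lemma dop_dop_anticomm: "dop i (dop j f) = - dop j (dop i (f::'k::field grass))"
proof (rule op_linear_eqI[OF op_linear_comp[OF op_linear_dop op_linear_dop]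
      op_linear_uminus[OF op_linear_comp[OF op_linear_dop op_linear_dop]], simplified])
  fix T
  show "dop i (dop j (gmono T)) = - dop j (dop i (gmono T :: 'k grass))"
  proof (cases "i \<noteq> j \<and> i |\<in>| T \<and> j |\<in>| T")
    case False
    then show ?thesis by (auto simp: dop_gmono dop_gsmult)
  next
    case True
    have "T |-| {|j|} |-| {|i|} = T |-| {|i|} |-| {|j|}" by auto
    with True show ?thesis
      by (simp add: dop_gmono dop_gsmult gsign_fminus mult.commute flip: gsmult_minus_left)
  qed
qed

lemma dop_xop: "dop i (xop j f) = (if i = j then f else 0) - xop j (dop i (f::'k::field grass))"
proof (rule op_linear_eqI[where A = "\<lambda>f. dop i (xop j f)"
      and B = "\<lambda>f. (if i = j then f else 0) - xop j (dop i f)", simplified])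
  show "op_linear (\<lambda>f. dop i (xop j (f::'k grass)))"
    by (rule op_linear_comp[OF op_linear_dop op_linear_xop])
  have "op_linear (\<lambda>f. if i = j then f else (0::'k grass))"
    by (cases "i = j") (simp_all add: op_linear_id op_linear_const_zero)
  then show "op_linear (\<lambda>f. (if i = j then f else 0) - xop j (dop i (f::'k grass)))"
    by (rule op_linear_diff_op[OF _ op_linear_comp[OF op_linear_xop op_linear_dop]])
next
  fix T
  show "dop i (xop j (gmono T)) = (if i = j then gmono T else 0) - xop j (dop i (gmono T :: 'k grass))"
  proof (cases "i = j")
    case True
    have "finsert j (T |-| {|j|}) = T" if "j |\<in>| T" using that by auto
    moreover have "finsert j T |-| {|j|} = T" if "j |\<notin>| T" using that by auto
    ultimately show ?thesis
      using True by (auto simp: dop_gmono dop_gsmult xop_gmono xop_gsmult)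
  next
    case False
    have "finsert j T |-| {|i|} = finsert j (T |-| {|i|})" using False by auto
    with False show ?thesis
      by (auto simp: dop_gmono dop_gsmult xop_gmono xop_gsmult gsign_fminus gsign_finsert
          mult.commute simp flip: gsmult_minus_left)
  qed
qed

lemma xop_lookup_nonzero:
  assumes "Poly_Mapping.lookup (xop j g) S \<noteq> (0::'k::field)"
  obtains T where "Poly_Mapping.lookup g T \<noteq> 0" "j |\<notin>| T" "S = finsert j T"
  using assms by (rule op_linear_lookup_nonzero[OF op_linear_xop])
    (auto simp: xop_gmono lookup_gmono split: if_splits)

lemma dop_lookup_nonzero:
  assumes "Poly_Mapping.lookup (dop j g) S \<noteq> (0::'k::field)"
  obtains T where "Poly_Mapping.lookup g T \<noteq> 0" "j |\<in>| T" "S = T |-| {|j|}"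
  using assms by (rule op_linear_lookup_nonzero[OF op_linear_dop])
    (auto simp: dop_gmono lookup_gmono split: if_splits)

lemma xop_lookup_fempty [simp]: "Poly_Mapping.lookup (xop j g) {||} = 0"
  by (metis xop_lookup_nonzero finsert_not_fempty)

section \<open>Parity and supercommutators\<close>

definition parity :: "bool \<Rightarrow> 'k::field grass \<Rightarrow> bool" where
  "parity q g \<longleftrightarrow> (\<forall>S. Poly_Mapping.lookup g S \<noteq> 0 \<longrightarrow> odd (fcard S) = q)"

lemma parity_gmono: "parity (odd (fcard T)) (gmono T)"
  unfolding parity_def by (simp add: lookup_gmono)

lemma parity_zero: "parity q 0"
  unfolding parity_def by simp

lemma parity_add: "parity q f \<Longrightarrow> parity q g \<Longrightarrow> parity q (f + g)"
  unfolding parity_def by (metis add.right_neutral add_0 lookup_add)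

lemma parity_True_lookup_fempty: "parity True g \<Longrightarrow> Poly_Mapping.lookup g {||} = 0"
  unfolding parity_def by (metis fcard_fempty even_zero)

lemma parity_xop: "parity q g \<Longrightarrow> parity (\<not> q) (xop j g)"
  unfolding parity_def
proof (intro allI impI)
  fix S assume g: "\<forall>S. Poly_Mapping.lookup g S \<noteq> 0 \<longrightarrow> odd (fcard S) = q"
    and S: "Poly_Mapping.lookup (xop j g) S \<noteq> 0"
  from S obtain T where "Poly_Mapping.lookup g T \<noteq> 0" "j |\<notin>| T" "S = finsert j T"
    by (rule xop_lookup_nonzero)
  with g show "odd (fcard S) = (\<not> q)" by (auto simp: fcard_finsert_disjoint)
qed

lemma parity_dop: "parity q g \<Longrightarrow> parity (\<not> q) (dop j g)"
  unfolding parity_def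
proof (intro allI impI)
  fix S assume g: "\<forall>S. Poly_Mapping.lookup g S \<noteq> 0 \<longrightarrow> odd (fcard S) = q"
    and S: "Poly_Mapping.lookup (dop j g) S \<noteq> 0"
  from S obtain T where T: "Poly_Mapping.lookup g T \<noteq> 0" "j |\<in>| T" "S = T |-| {|j|}"
    by (rule dop_lookup_nonzero)
  then have "fcard T = Suc (fcard S)"
    by (metis fcard_finsert_disjoint finsert_fminus fminus_iff finsertCI)
  with g T(1) show "odd (fcard S) = (\<not> q)" by auto
qed

lemma homog_iff_parity: "homog p A \<longleftrightarrow> (\<forall>T. parity (odd (fcard T) \<noteq> p) (A (gmono T)))"
  unfolding homog_def parity_def by auto

lemma parity_apply:
  assumes "op_linear A" "homog p A" "parity q g"
  shows "parity (q \<noteq> p) (A g)"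
  unfolding parity_def
proof (intro allI impI)
  fix S assume "Poly_Mapping.lookup (A g) S \<noteq> 0"
  then obtain T where T: "Poly_Mapping.lookup g T \<noteq> 0" "Poly_Mapping.lookup (A (gmono T)) S \<noteq> 0"
    by (rule op_linear_lookup_nonzero[OF assms(1)])
  have "odd (fcard T) = q" using T(1) assms(3) unfolding parity_def by blast
  moreover have "odd (fcard S + fcard T) = p" using T(2) assms(2) unfolding homog_def by blast
  ultimately show "odd (fcard S) = (q \<noteq> p)" by auto
qed

lemma homog_comp:
  assumes "op_linear A" "homog p A" "homog q B"
  shows "homog (p \<noteq> q) (\<lambda>f. A (B f))"
  unfolding homog_iff_parity
proof
  fix T
  have "parity (odd (fcard T) \<noteq> q) (B (gmono T))"
    using assms(3) unfolding homog_iff_parity by blast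
  then have "parity ((odd (fcard T) \<noteq> q) \<noteq> p) (A (B (gmono T)))"
    by (rule parity_apply[OF assms(1,2)])
  moreover have "((odd (fcard T) \<noteq> q) \<noteq> p) = (odd (fcard T) \<noteq> (p \<noteq> q))" by auto
  ultimately show "parity (odd (fcard T) \<noteq> (p \<noteq> q)) (A (B (gmono T)))" by simp
qed

lemma homog_zero_op: "homog p (\<lambda>f. 0)"
  and homog_scaled: "homog p A \<Longrightarrow> homog p (\<lambda>f. gsmult c (A f))"
  unfolding homog_def by simp_all

lemma homog_plus: "homog p A \<Longrightarrow> homog p B \<Longrightarrow> homog p (\<lambda>f. A f + B f)"
  unfolding homog_def by (metis add.right_neutral add_0 lookup_add)

lemma homog_diff: "homog p A \<Longrightarrow> homog p B \<Longrightarrow> homog p (\<lambda>f. A f - B f)"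
  unfolding homog_def by (metis diff_zero diff_self lookup_minus)

lemma homog_even_odd_eq_0:
  assumes "op_linear A" "homog False A" "homog True A"
  shows "A f = 0"
proof (rule op_linear_eqI[OF assms(1) op_linear_const_zero])
  fix T
  show "A (gmono T) = 0"
  proof (rule poly_mapping_eqI, rule ccontr)
    fix S assume "Poly_Mapping.lookup (A (gmono T)) S \<noteq> Poly_Mapping.lookup 0 S"
    then have "Poly_Mapping.lookup (A (gmono T)) S \<noteq> 0" by simp
    then have "odd (fcard S + fcard T) = False" "odd (fcard S + fcard T) = True"
      using assms(2,3) unfolding homog_def by blast+
    then show False by simp
  qed
qed

lemma homog_xop: "homog True (xop j)"
  unfolding homog_iff_parity using parity_xop[OF parity_gmono] by simp blast

lemma sbr_apply: "sbr p q A B f = A (B f) + gsmult (if p \<and> q then 1 else -1) (B (A f))"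
  unfolding sbr_def op_add_def op_smult_def by simp

lemma op_linear_sbr: "op_linear A \<Longrightarrow> op_linear B \<Longrightarrow> op_linear (sbr p q A B)"
  unfolding sbr_def op_add_def op_smult_def o_def
  by (rule op_linear_plus[OF op_linear_comp op_linear_scaled[OF op_linear_comp]])

lemma homog_sbr:
  assumes "op_linear A" "op_linear B" "homog p A" "homog q B"
  shows "homog (p \<noteq> q) (sbr p q A B)"
proof -
  have "homog (q \<noteq> p) (\<lambda>f. B (A f))" by (rule homog_comp[OF assms(2,4,3)])
  moreover have "(q \<noteq> p) = (p \<noteq> q)" by auto
  ultimately have "homog (p \<noteq> q) (\<lambda>f. B (A f))" by simp
  then show ?thesis unfolding sbr_def op_add_def op_smult_def o_def
    by (rule homog_plus[OF homog_comp[OF assms(1,3,4)] homog_scaled])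
qed

section \<open>Pivot elements\<close>

definition supp_below :: "nat \<Rightarrow> 'k::field grass \<Rightarrow> bool" where
  "supp_below B g \<longleftrightarrow> (\<forall>S. Poly_Mapping.lookup g S \<noteq> 0 \<longrightarrow> (\<forall>t. t |\<in>| S \<longrightarrow> t < B))"

lemma supp_below_xop: "supp_below B g \<Longrightarrow> j < B \<Longrightarrow> supp_below B (xop j g)"
  unfolding supp_below_def by (metis finsert_iff xop_lookup_nonzero)

lemma supp_below_dop: "supp_below B g \<Longrightarrow> supp_below B (dop j g)"
  unfolding supp_below_def by (metis fminus_iff dop_lookup_nonzero)

lemma ex_supp_below: "\<exists>B. supp_below B g \<and> j < B"
proof -
  have "finite (\<Union>S\<in>Poly_Mapping.keys g. fset S)" by simp
  then obtain B where B: "\<forall>t\<in>\<Union>S\<in>Poly_Mapping.keys g. fset S. t < B"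
    using finite_nat_set_iff_bounded by blast
  have "supp_below (max B (Suc j)) g"
    unfolding supp_below_def
  proof (intro allI impI)
    fix S t assume "Poly_Mapping.lookup g S \<noteq> 0" "t |\<in>| S"
    then have "t < B" using B by (auto simp: in_keys_iff)
    then show "t < max B (Suc j)" by simp
  qed
  then show ?thesis by (intro exI[of _ "max B (Suc j)"]) simp
qed

lemma down_induct_step3:
  fixes B :: nat
  assumes base: "\<And>n. B \<le> n \<Longrightarrow> P n"
    and step: "\<And>n. n < B \<Longrightarrow> P (n + 3) \<Longrightarrow> P n"
  shows "P n"
proof (induction "B - n" arbitrary: n rule: less_induct)
  case less
  show ?case
  proof (cases "B \<le> n")
    case True
    then show ?thesis by (rule base)
  next
    case False
    then have "P (n + 3)" using less by simp
    with False show ?thesis by (simp add: step)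
  qed
qed

lemma pairprod_0 [simp]: "pairprod n 0 = id"
  unfolding pairprod_def by simp

lemma pairprod_Suc: "pairprod n (Suc k) g = xop n (xop (n + 1) (pairprod (n + 3) k g))"
proof -
  let ?F = "\<lambda>n m (h::'a grass \<Rightarrow> 'a grass). xop (n + 3 * m) \<circ> xop (n + 3 * m + 1) \<circ> h"
  have shift: "?F n \<circ> Suc = ?F (n + 3)" by (rule ext)+ (simp add: algebra_simps)
  have "[0..<Suc k] = 0 # map Suc [0..<k]" by (simp add: map_Suc_upt upt_conv_Cons)
  then have "pairprod n (Suc k) = ?F n 0 (foldr (?F n \<circ> Suc) [0..<k] id)"
    unfolding pairprod_def by (simp add: foldr_map)
  then show ?thesis unfolding shift pairprod_def by simp
qed

lemma op_linear_pivot: "op_linear (pivot n)"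
  unfolding pivot_def by (rule op_linear_lin_ext)

lemmas pivot_add = op_linear_add[OF op_linear_pivot]
  and pivot_minus = op_linear_minus[OF op_linear_pivot]

lemma pivot_gmono:
  "pivot n (gmono T) = (\<Sum>k\<in>{k. n + 3 * k |\<in>| T}. pairprod n k (dop (n + 3 * k) (gmono T)))"
  unfolding pivot_def by simp

lemma finite_pivot_indices: "finite {k. n + 3 * k |\<in>| (T :: nat fset)}"
proof (rule finite_subset)
  show "{k. n + 3 * k |\<in>| T} \<subseteq> {..fMax T}"
    by (auto dest: fMax_ge)
qed simp

lemma pivot_unfold: "pivot n f = dop n f + xop n (xop (n + 1) (pivot (n + 3) f))"
proof (rule op_linear_eqI[where A = "pivot n"
      and B = "\<lambda>f. dop n f + xop n (xop (n + 1) (pivot (n + 3) f))"])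
  show "op_linear (pivot n)" by (rule op_linear_pivot)
  show "op_linear (\<lambda>f. dop n f + xop n (xop (n + 1) (pivot (n + 3) f)))"
    by (intro op_linear_plus op_linear_dop op_linear_comp[OF op_linear_xop]
        op_linear_comp[OF op_linear_xop op_linear_pivot])
next
  fix T
  let ?K = "{k. n + 3 + 3 * k |\<in>| T}"
  let ?t = "\<lambda>k. pairprod n k (dop (n + 3 * k) (gmono T))"
  have indices: "{k. n + 3 * k |\<in>| T} = (if n |\<in>| T then insert 0 (Suc ` ?K) else Suc ` ?K)"
  proof (rule set_eqI)
    fix k
    show "k \<in> {k. n + 3 * k |\<in>| T} \<longleftrightarrow> k \<in> (if n |\<in>| T then insert 0 (Suc ` ?K) else Suc ` ?K)"
      by (cases k) (auto simp: algebra_simps)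
  qed
  have "sum ?t (Suc ` ?K) = (\<Sum>k\<in>?K. ?t (Suc k))"
    by (rule sum.reindex_cong[where l = Suc]) auto
  also have "\<dots> = xop n (xop (n + 1) (\<Sum>k\<in>?K. pairprod (n + 3) k (dop (n + 3 + 3 * k) (gmono T))))"
    by (simp add: pairprod_Suc algebra_simps xop_sum)
  also have "\<dots> = xop n (xop (n + 1) (pivot (n + 3) (gmono T)))"
    by (simp add: pivot_gmono)
  finally have tail: "sum ?t (Suc ` ?K) = xop n (xop (n + 1) (pivot (n + 3) (gmono T)))" .
  have "finite ?K" "0 \<notin> Suc ` ?K" using finite_pivot_indices[of "n + 3" T] by (auto simp: add.assoc)
  then have "pivot n (gmono T) = (if n |\<in>| T then ?t 0 else 0) + sum ?t (Suc ` ?K)"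
    unfolding pivot_gmono[of n] indices by simp
  also have "(if n |\<in>| T then ?t 0 else 0) = dop n (gmono T)"
    by (simp add: dop_gmono)
  finally show "pivot n (gmono T) = dop n (gmono T) + xop n (xop (n + 1) (pivot (n + 3) (gmono T)))"
    unfolding tail .
qed

lemma pivot_Suc_unfold:
  "pivot (Suc n) h = dop (Suc n) h + xop (Suc n) (xop (Suc (Suc n)) (pivot (n + 4) h))"
  using pivot_unfold[of "Suc n" h] by (simp add: numeral_eq_Suc)

lemma pivot_eq_0_if_supp_below:
  assumes "supp_below B g" "B \<le> n"
  shows "pivot n g = 0"
proof (rule trans[OF op_linear_expand[OF op_linear_pivot]], rule sum.neutral, rule ballI)
  fix T assume "T \<in> Poly_Mapping.keys g"
  then have "{k. n + 3 * k |\<in>| T} = {}"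
    using assms unfolding supp_below_def by (fastforce simp: in_keys_iff)
  then show "gsmult (Poly_Mapping.lookup g T) (pivot n (gmono T)) = 0"
    by (simp add: pivot_gmono)
qed

lemma parity_pivot: "parity q g \<Longrightarrow> parity (\<not> q) (pivot n g)"
proof -
  assume g: "parity q g"
  obtain B where B: "supp_below B g" using ex_supp_below by blast
  show ?thesis
  proof (induction n rule: down_induct_step3[where B = B])
    case (1 n)
    then show ?case using pivot_eq_0_if_supp_below[OF B] by (simp add: parity_zero)
  next
    case (2 n)
    have "parity q (xop (n + 1) (pivot (n + 3) g))" using parity_xop[OF 2(2)] by simp
    then have "parity (\<not> q) (xop n (xop (n + 1) (pivot (n + 3) g)))" by (rule parity_xop)
    then show ?case unfolding pivot_unfold[of n g] by (intro parity_add parity_dop g)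
  qed
qed

lemma homog_pivot: "homog True (pivot n)"
  unfolding homog_iff_parity using parity_pivot[OF parity_gmono] by simp blast

lemma pivot_xop:
  assumes "j < n + 3"
  shows "pivot n (xop j g) = (if j = n then g else 0) - xop j (pivot n g)"
proof -
  obtain B where B: "supp_below B g" "j < B" using ex_supp_below by blast
  have "j < n + 3 \<longrightarrow> pivot n (xop j g) = (if j = n then g else 0) - xop j (pivot n g)"
  proof (induction n rule: down_induct_step3[where B = B])
    case (1 n)
    then show ?case
      using B pivot_eq_0_if_supp_below[OF supp_below_xop[OF B]] pivot_eq_0_if_supp_below[OF B(1)]
      by simp
  next
    case (2 n)
    show ?case
    proof
      assume "j < n + 3"
      with 2 have "pivot (n + 3) (xop j g) = - xop j (pivot (n + 3) g)" by simp
      then show "pivot n (xop j g) = (if j = n then g else 0) - xop j (pivot n g)"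
        by (simp add: pivot_unfold[of n] dop_xop xop_minus xop_add xop_xop_xop_comm eq_commute[of n j])
    qed
  qed
  with assms show ?thesis by blast
qed

lemma pivot_xop_ne: "j < n + 3 \<Longrightarrow> j \<noteq> n \<Longrightarrow> pivot n (xop j g) = - xop j (pivot n g)"
  by (simp add: pivot_xop)

lemma dop_pivot:
  assumes "m < n"
  shows "dop m (pivot n g) = - pivot n (dop m g)"
proof -
  obtain B where B: "supp_below B g" using ex_supp_below by blast
  have "m < n \<longrightarrow> dop m (pivot n g) = - pivot n (dop m g)"
  proof (induction n rule: down_induct_step3[where B = B])
    case (1 n)
    then show ?case
      using pivot_eq_0_if_supp_below[OF supp_below_dop[OF B]] pivot_eq_0_if_supp_below[OF B] by simp
  next
    case (2 n)
    show ?case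
    proof
      assume mn: "m < n"
      with 2 have "dop m (pivot (n + 3) g) = - pivot (n + 3) (dop m g)" by simp
      with mn show "dop m (pivot n g) = - pivot n (dop m g)"
        by (simp add: pivot_unfold[of n] dop_add dop_dop_anticomm[of m n] dop_xop xop_minus)
    qed
  qed
  with assms show ?thesis by blast
qed

lemma pivot_dop: "m < n \<Longrightarrow> pivot n (dop m g) = - dop m (pivot n g)"
  by (simp add: dop_pivot)

lemma pivot_lookup_singleton:
  "Poly_Mapping.lookup (pivot n (gmono {|m|})) {||} = (if m = n then 1 else 0)"
proof -
  have below_n: "{t. t = n \<and> t < n} = {}" by auto
  show ?thesis
    by (simp add: pivot_unfold[of n] lookup_add dop_gmono lookup_gmono gsign_def below_n)
qed

lemma pivot_anticomm_Suc:
  "pivot n (pivot (Suc n) g) + pivot (Suc n) (pivot n g) = - xop n (pivot (n + 3) g)"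
proof -
  define w where "w = pivot (n + 3) g"
  have "pivot (n + 3) (pivot (Suc n) g)
      = - dop (Suc n) w + xop (Suc n) (xop (Suc (Suc n)) (pivot (n + 3) (pivot (n + 4) g)))"
    by (simp add: pivot_Suc_unfold[of n g] pivot_add pivot_dop pivot_xop_ne xop_minus w_def)
  then have left: "pivot n (pivot (Suc n) g)
      = - pivot (Suc n) (dop n g) - xop n (xop (Suc n) (dop (Suc n) w))"
    by (simp add: pivot_unfold[of n "pivot (Suc n) g"] dop_pivot xop_add xop_diff xop_minus
        xop_xop_same)
  have "dop (Suc n) (pivot n g)
      = dop (Suc n) (dop n g) - xop n w + xop n (xop (Suc n) (dop (Suc n) w))"
    by (simp add: pivot_unfold[of n g] dop_add dop_xop xop_diff xop_minus w_def)
  moreover have "pivot (n + 4) (pivot n g)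
      = pivot (n + 4) (dop n g) + xop n (xop (Suc n) (pivot (n + 4) w))"
    by (simp add: pivot_unfold[of n g] pivot_add pivot_xop_ne xop_minus w_def)
  moreover have "xop (Suc n) (xop (Suc (Suc n)) (xop n (xop (Suc n) u))) = 0" for u
    by (simp add: xop_xop_xop_comm[of n "Suc n" "Suc (Suc n)", symmetric]
        xop_xop_anticomm[of "Suc n" n] xop_xop_same xop_minus)
  ultimately have right: "pivot (Suc n) (pivot n g)
      = dop (Suc n) (dop n g) - xop n w + xop n (xop (Suc n) (dop (Suc n) w))
        + xop (Suc n) (xop (Suc (Suc n)) (pivot (n + 4) (dop n g)))"
    by (simp add: pivot_Suc_unfold[of n "pivot n g"] xop_add)
  show ?thesis
    unfolding left right pivot_Suc_unfold[of n "dop n g"] w_def[symmetric] by (simp add: algebra_simps)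
qed

lemma pivot_comm_xop_pivot:
  "pivot n (xop n (pivot (n + 3) g)) - xop n (pivot (n + 3) (pivot n g)) = pivot (n + 3) g"
proof -
  define w where "w = pivot (n + 3) g"
  have "pivot (n + 3) (pivot n g) = - dop n w + xop n (xop (n + 1) (pivot (n + 3) w))"
    by (simp add: pivot_unfold[of n g] pivot_add pivot_dop pivot_xop_ne xop_minus w_def)
  then have "xop n (pivot (n + 3) (pivot n g)) = - xop n (dop n w)"
    by (simp add: xop_diff xop_xop_same)
  moreover have "pivot n (xop n w) = w - xop n (dop n w)"
    by (simp add: pivot_xop pivot_unfold[of n w] xop_add xop_xop_same)
  ultimately show ?thesis unfolding w_def[symmetric] by simp
qed

lemma pivot_anticomm_1_3:
  "pivot 1 (pivot 3 f) + pivot 3 (pivot 1 f) = - xop 1 (xop 2 (xop 3 (pivot 6 f)))"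
proof -
  have unfold1: "pivot (Suc 0) h = dop (Suc 0) h + xop (Suc 0) (xop 2 (pivot 4 h))" for h
    using pivot_unfold[of 1 h] by (simp add: numeral_2_eq_2)
  have "pivot 1 (pivot 3 f) + pivot 3 (pivot 1 f)
      = xop 1 (xop 2 (pivot 3 (pivot 4 f) + pivot 4 (pivot 3 f)))"
    by (simp add: unfold1[of "pivot 3 f"] unfold1[of f] pivot_add pivot_dop pivot_xop_ne xop_add
        xop_minus)
  also have "pivot 3 (pivot 4 f) + pivot 4 (pivot 3 f) = - xop 3 (pivot 6 f)"
    using pivot_anticomm_Suc[of 3 f] by simp
  finally show ?thesis by (simp add: xop_minus)
qed

(* The closure conditions in lie_subsuper; unlike gradedness, they pass to intersections
   such as Qalg. *)
definition lie_closed :: "'k::field gop set \<Rightarrow> bool" where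
  "lie_closed L \<longleftrightarrow> op_zero \<in> L \<and> (\<forall>A\<in>L. \<forall>B\<in>L. op_add A B \<in> L) \<and> (\<forall>c. \<forall>A\<in>L. op_smult c A \<in> L) \<and>
     (\<forall>A\<in>L. \<forall>B\<in>L. \<forall>p q. homog p A \<longrightarrow> homog q B \<longrightarrow> sbr p q A B \<in> L) \<and>
     ((2::'k) = 0 \<longrightarrow> (\<forall>A\<in>L. homog True A \<longrightarrow> A \<circ> A \<in> L))"

lemma lie_closed_op_zero: "lie_closed L \<Longrightarrow> op_zero \<in> L"
  and lie_closed_op_add: "lie_closed L \<Longrightarrow> A \<in> L \<Longrightarrow> B \<in> L \<Longrightarrow> op_add A B \<in> L"
  and lie_closed_op_smult: "lie_closed L \<Longrightarrow> A \<in> L \<Longrightarrow> op_smult c A \<in> L"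
  and lie_closed_sbr:
    "lie_closed L \<Longrightarrow> A \<in> L \<Longrightarrow> B \<in> L \<Longrightarrow> homog p A \<Longrightarrow> homog q B \<Longrightarrow> sbr p q A B \<in> L"
  unfolding lie_closed_def by blast+

lemma lie_closed_square:
  fixes L :: "'k::field gop set"
  shows "lie_closed L \<Longrightarrow> (2::'k) = 0 \<Longrightarrow> A \<in> L \<Longrightarrow> homog True A \<Longrightarrow> A \<circ> A \<in> L"
  unfolding lie_closed_def by blast

lemma lie_closed_op_span:
  assumes "lie_closed L" "F \<subseteq> L"
  shows "op_span F \<subseteq> L"
proof
  fix D assume "D \<in> op_span F"
  then obtain G c where D: "D = (\<lambda>f. \<Sum>A\<in>G. gsmult (c A) (A f))" "finite G" "G \<subseteq> F"
    unfolding op_span_def by blast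
  have "(\<lambda>f. \<Sum>A\<in>G. op_smult (c A) A f) \<in> L"
    using D(2,3)
  proof (induction G rule: finite_induct)
    case empty
    show ?case unfolding op_sum_empty by (rule lie_closed_op_zero[OF assms(1)])
  next
    case (insert A G)
    then have "op_smult (c A) A \<in> L" "(\<lambda>f. \<Sum>A\<in>G. op_smult (c A) A f) \<in> L"
      using assms by (auto intro: lie_closed_op_smult)
    then show ?case
      unfolding op_sum_insert[OF insert(1,2)] by (rule lie_closed_op_add[OF assms(1)])
  qed
  then show "D \<in> L" unfolding D(1) op_smult_def .
qed

lemma lie_subsuper_if_self_ideal: "is_ideal L L \<Longrightarrow> lie_subsuper L"
  unfolding is_ideal_def lie_subsuper_def by blast

definition graded_family :: "(bool \<Rightarrow> 'k::field gop set) \<Rightarrow> bool" where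
  "graded_family S \<longleftrightarrow> (\<forall>p. subspace_op (S p) \<and> (\<forall>A\<in>S p. homog p A))"

lemma graded_familyD:
  assumes "graded_family S"
  shows "A \<in> S p \<Longrightarrow> op_linear A" "A \<in> S p \<Longrightarrow> homog p A" "op_zero \<in> S p"
    "A \<in> S p \<Longrightarrow> B \<in> S p \<Longrightarrow> op_add A B \<in> S p" "A \<in> S p \<Longrightarrow> op_smult c A \<in> S p"
  using assms unfolding graded_family_def subspace_op_def by blast+

definition graded_sum :: "'k::field gop set \<Rightarrow> (bool \<Rightarrow> 'k gop set) \<Rightarrow> 'k gop set" where
  "graded_sum L S = {op_add B C | B C. B \<in> L \<inter> S False \<and> C \<in> L \<inter> S True}"

lemma graded_sum_subset: "lie_closed L \<Longrightarrow> graded_sum L S \<subseteq> L"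
  unfolding lie_closed_def graded_sum_def by blast

lemma graded_sumI:
  assumes "lie_closed L" "graded_family S" "A \<in> L" "A \<in> S p"
  shows "A \<in> graded_sum L S"
proof -
  have "op_zero \<in> L \<inter> S q" for q
    using lie_closed_op_zero[OF assms(1)] graded_familyD(3)[OF assms(2)] by blast
  then have "A = op_add op_zero A \<and> op_zero \<in> L \<inter> S False \<and> A \<in> L \<inter> S True
      \<or> A = op_add A op_zero \<and> A \<in> L \<inter> S False \<and> op_zero \<in> L \<inter> S True"
    using assms(3,4) by (cases p) simp_all
  then show ?thesis unfolding graded_sum_def by blast
qed

lemma homog_decomposition_unique:
  assumes "op_linear B" "op_linear C" "homog False B" "homog True C" "homog p (op_add B C)"
  shows "op_add B C = (if p then C else B)"
proof (cases p)
  case True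
  have "homog True (\<lambda>f. op_add B C f - C f)"
    using assms(4,5) True by (intro homog_diff) simp_all
  then have "B f = 0" for f
    using homog_even_odd_eq_0[OF assms(1,3)] by (simp add: op_add_def)
  with True show ?thesis by (simp add: op_add_def)
next
  case False
  have "homog False (\<lambda>f. op_add B C f - B f)"
    using assms(3,5) False by (intro homog_diff) simp_all
  then have "C f = 0" for f
    using homog_even_odd_eq_0[OF assms(2) _ assms(4)] by (simp add: op_add_def)
  with False show ?thesis by (simp add: op_add_def)
qed

lemma graded_sum_homogD:
  assumes "graded_family S" "A \<in> graded_sum L S" "homog p A"
  shows "A \<in> L \<inter> S p"
proof -
  obtain B C where A: "A = op_add B C" "B \<in> L \<inter> S False" "C \<in> L \<inter> S True"
    using assms(2) unfolding graded_sum_def by blast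
  then have "op_linear B" "op_linear C" "homog False B" "homog True C"
    using graded_familyD[OF assms(1)] by blast+
  then have "A = (if p then C else B)"
    using homog_decomposition_unique assms(3) A(1) by blast
  with A(2,3) show ?thesis by (cases p) simp_all
qed

lemma op_add_mem_graded_sum:
  assumes "lie_closed L" "graded_family S" "A \<in> graded_sum L S" "B \<in> graded_sum L S"
  shows "op_add A B \<in> graded_sum L S"
proof -
  obtain A0 A1 B0 B1 where "A = op_add A0 A1" "B = op_add B0 B1"
    "A0 \<in> L \<inter> S False" "A1 \<in> L \<inter> S True" "B0 \<in> L \<inter> S False" "B1 \<in> L \<inter> S True"
    using assms(3,4) unfolding graded_sum_def by blast
  with assms(1,2) have "op_add A B = op_add (op_add A0 B0) (op_add A1 B1) \<and>
      op_add A0 B0 \<in> L \<inter> S False \<and> op_add A1 B1 \<in> L \<inter> S True"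
    by (simp add: op_add_swap lie_closed_op_add graded_familyD)
  then show ?thesis unfolding graded_sum_def by blast
qed

lemma op_smult_mem_graded_sum:
  assumes "lie_closed L" "graded_family S" "A \<in> graded_sum L S"
  shows "op_smult c A \<in> graded_sum L S"
proof -
  obtain A0 A1 where "A = op_add A0 A1" "A0 \<in> L \<inter> S False" "A1 \<in> L \<inter> S True"
    using assms(3) unfolding graded_sum_def by blast
  with assms(1,2) have "op_smult c A = op_add (op_smult c A0) (op_smult c A1) \<and>
      op_smult c A0 \<in> L \<inter> S False \<and> op_smult c A1 \<in> L \<inter> S True"
    by (simp add: op_smult_op_add lie_closed_op_smult graded_familyD)
  then show ?thesis unfolding graded_sum_def by blast
qed

lemma subspace_op_graded_sum:
  assumes "lie_closed L" "graded_family S"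
  shows "subspace_op (graded_sum L S)"
  unfolding subspace_op_def
proof (intro conjI ballI allI)
  show "op_linear A" if "A \<in> graded_sum L S" for A
    using that graded_familyD(1)[OF assms(2)] unfolding graded_sum_def op_add_def
    by (auto intro: op_linear_plus)
  show "op_zero \<in> graded_sum L S"
    by (rule graded_sumI[OF assms lie_closed_op_zero[OF assms(1)] graded_familyD(3)[OF assms(2)]])
qed (use assms op_add_mem_graded_sum op_smult_mem_graded_sum in blast)+

lemma graded_graded_sum:
  assumes "lie_closed L" "graded_family S"
  shows "graded (graded_sum L S)"
  unfolding graded_def
proof
  fix A assume "A \<in> graded_sum L S"
  then obtain B C where "A = op_add B C" "B \<in> L \<inter> S False" "C \<in> L \<inter> S True"
    unfolding graded_sum_def by blast
  moreover have "homog False B" "homog True C"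
    using calculation assms(2) unfolding graded_family_def by blast+
  ultimately show "\<exists>B\<in>graded_sum L S. \<exists>C\<in>graded_sum L S. homog False B \<and> homog True C \<and> A = op_add B C"
    using graded_sumI[OF assms] by blast
qed

lemma is_ideal_graded_sum:
  assumes L: "lie_closed L" and S: "graded_family S" and T: "graded_family T"
    and sub: "\<And>p. T p \<subseteq> S p"
    and bracket: "\<And>p q A B. A \<in> L \<inter> S p \<Longrightarrow> B \<in> L \<inter> T q \<Longrightarrow> sbr p q A B \<in> T (p \<noteq> q)"
    and square: "\<And>B. B \<in> L \<inter> T True \<Longrightarrow> B \<circ> B \<in> T False"
  shows "is_ideal (graded_sum L S) (graded_sum L T)"
  unfolding is_ideal_def
proof (intro conjI ballI allI impI)
  show "graded_sum L T \<subseteq> graded_sum L S"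
    using sub unfolding graded_sum_def by blast
  show "subspace_op (graded_sum L T)" by (rule subspace_op_graded_sum[OF L T])
  show "graded (graded_sum L T)" by (rule graded_graded_sum[OF L T])
next
  fix A B p q
  assume "A \<in> graded_sum L S" "B \<in> graded_sum L T" "homog p A" "homog q B"
  then have AB: "A \<in> L \<inter> S p" "B \<in> L \<inter> T q"
    using graded_sum_homogD S T by blast+
  then have "sbr p q A B \<in> L"
    using lie_closed_sbr[OF L _ _ \<open>homog p A\<close> \<open>homog q B\<close>] by blast
  then show "sbr p q A B \<in> graded_sum L T"
    using bracket[OF AB] by (rule graded_sumI[OF L T])
next
  fix B assume "(2::'a) = 0" "B \<in> graded_sum L T" "homog True B"
  moreover from this have B: "B \<in> L \<inter> T True" using graded_sum_homogD T by blast
  ultimately have "B \<circ> B \<in> L" using lie_closed_square[OF L] by blast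
  then show "B \<circ> B \<in> graded_sum L T"
    using square[OF B] by (rule graded_sumI[OF L T])
qed

section \<open>Operators with scalar supercommutators against x_0, x_1, x_2\<close>

definition xscalar :: "bool \<Rightarrow> (nat \<Rightarrow> 'k::field) \<Rightarrow> 'k gop set" where
  "xscalar p c = {A. op_linear A \<and> homog p A \<and>
     (\<forall>j<3. \<forall>f. sbr p True A (xop j) f = gsmult (c j) f)}"

definition xnormalizer :: "bool \<Rightarrow> 'k::field gop set" where
  "xnormalizer p = (\<Union>c. xscalar p c)"

definition xcentralizer :: "bool \<Rightarrow> 'k::field gop set" where
  "xcentralizer p = xscalar p (\<lambda>_. 0)"

lemma xscalarD: "A \<in> xscalar p c \<Longrightarrow> op_linear A \<and> homog p A"
  unfolding xscalar_def by blast

lemma xscalar_xop: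
  assumes "A \<in> xscalar p c" "j < 3"
  shows "A (xop j f) = gsmult (c j) f - gsmult (if p then 1 else -1) (xop j (A f))"
  using assms unfolding xscalar_def by (auto simp: sbr_apply eq_diff_eq)

lemma xscalar_cong: "(\<And>j. j < 3 \<Longrightarrow> c j = d j) \<Longrightarrow> xscalar p c = xscalar p d"
  unfolding xscalar_def by auto

lemma op_zero_xscalar: "op_zero \<in> xscalar p (\<lambda>_. 0)"
  unfolding xscalar_def op_zero_def sbr_apply
  by (simp add: op_linear_const_zero homog_zero_op)

lemma xscalar_add:
  assumes "A \<in> xscalar p c" "B \<in> xscalar p d"
  shows "op_add A B \<in> xscalar p (\<lambda>j. c j + d j)"
proof -
  have "sbr p True (op_add A B) (xop j) f = sbr p True A (xop j) f + sbr p True B (xop j) f" for j f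
    by (simp add: sbr_apply op_add_def xop_add gsmult_add)
  then show ?thesis
    using assms unfolding xscalar_def
    by (simp add: op_add_def op_linear_plus homog_plus gsmult_add_left)
qed

lemma xscalar_smult:
  assumes "A \<in> xscalar p c"
  shows "op_smult e A \<in> xscalar p (\<lambda>j. e * c j)"
proof -
  have "sbr p True (op_smult e A) (xop j) f = gsmult e (sbr p True A (xop j) f)" for j f
    by (simp add: sbr_apply op_smult_def xop_gsmult gsmult_add mult.commute)
  then show ?thesis
    using assms unfolding xscalar_def
    by (simp add: op_smult_def op_linear_scaled homog_scaled)
qed

lemma xscalar_sum:
  assumes "finite K" "\<And>i. i \<in> K \<Longrightarrow> A i \<in> xscalar p (c i)"
  shows "(\<lambda>f. \<Sum>i\<in>K. A i f) \<in> xscalar p (\<lambda>j. \<Sum>i\<in>K. c i j)"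
  using assms
proof (induction K rule: finite_induct)
  case empty
  then show ?case using op_zero_xscalar[of p, unfolded op_zero_def] by simp
next
  case (insert k K)
  then have "op_add (A k) (\<lambda>f. \<Sum>i\<in>K. A i f) \<in> xscalar p (\<lambda>j. c k j + (\<Sum>i\<in>K. c i j))"
    by (intro xscalar_add) simp_all
  with insert(1,2) show ?case by (simp add: op_add_def)
qed

(* [A, x_j] is odd, so its value at 1 has no constant term. *)
lemma xscalar_even_eq_0:
  assumes "A \<in> xscalar False c" "j < 3"
  shows "c j = 0"
proof -
  have A: "op_linear A" "homog False A" using xscalarD[OF assms(1)] by auto
  have "parity True (A (xop j (gmono {||})))"
    using parity_apply[OF A parity_xop[where j = j, OF parity_gmono[of "{||}"]]]
    by (simp add: fcard_fempty)
  then have "Poly_Mapping.lookup (A (xop j (gmono {||}))) {||} = 0"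
    by (rule parity_True_lookup_fempty)
  then show ?thesis
    using xscalar_xop[OF assms, of "gmono {||}"] by (simp add: lookup_add lookup_gmono)
qed

lemma xcentralizer_subset_xnormalizer: "xcentralizer p \<subseteq> xnormalizer p"
  unfolding xcentralizer_def xnormalizer_def by blast

lemma xnormalizer_even: "xnormalizer False = xcentralizer False"
proof
  show "xnormalizer False \<subseteq> xcentralizer False"
    unfolding xnormalizer_def xcentralizer_def
    using xscalar_cong[of _ "\<lambda>_. 0"] xscalar_even_eq_0 by blast
qed (auto simp: xnormalizer_def xcentralizer_def)

lemma subspace_op_xnormalizer: "subspace_op (xnormalizer p)"
  unfolding subspace_op_def xnormalizer_def
  using op_zero_xscalar xscalar_add xscalar_smult xscalarD by blast

lemma subspace_op_xcentralizer: "subspace_op (xcentralizer p)"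
proof -
  have "op_add A B \<in> xscalar p (\<lambda>_. 0)" "op_smult e A \<in> xscalar p (\<lambda>_. 0)"
    if "A \<in> xscalar p (\<lambda>_. 0)" "B \<in> xscalar p (\<lambda>_. 0)" for A B e
    using xscalar_add[OF that] xscalar_smult[OF that(1), of e] by simp_all
  then show ?thesis
    unfolding subspace_op_def xcentralizer_def using op_zero_xscalar xscalarD by blast
qed

lemma graded_family_xnormalizer: "graded_family xnormalizer"
  and graded_family_xcentralizer: "graded_family xcentralizer"
  unfolding graded_family_def
  using subspace_op_xnormalizer subspace_op_xcentralizer xscalarD
  unfolding xnormalizer_def xcentralizer_def by blast+

lemma xnormalizer_xop:
  assumes "A \<in> xnormalizer p"
  obtains c where
    "\<And>j f. j < 3 \<Longrightarrow> A (xop j f) = gsmult (c j) f - gsmult (if p then 1 else -1) (xop j (A f))"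
    "\<not> p \<Longrightarrow> c = (\<lambda>_. 0)"
proof (cases p)
  case True
  from assms obtain c where "A \<in> xscalar p c" unfolding xnormalizer_def by blast
  with True show ?thesis using that[of c] xscalar_xop by blast
next
  case False
  with assms have "A \<in> xscalar p (\<lambda>_. 0)" by (simp add: xnormalizer_even xcentralizer_def)
  with False show ?thesis using that[of "\<lambda>_. 0"] xscalar_xop by blast
qed

(* Super Jacobi identity, with [A, x_j] and [X, x_j] central scalars (zero for even A, X). *)
lemma xnormalizer_sbr:
  assumes "A \<in> xnormalizer p" "X \<in> xnormalizer q"
  shows "sbr p q A X \<in> xcentralizer (p \<noteq> q)"
proof -
  have linA: "op_linear A" and hA: "homog p A" and linX: "op_linear X" and hX: "homog q X"
    using assms unfolding xnormalizer_def xscalar_def by auto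
  obtain a where a: "\<And>j f. j < 3 \<Longrightarrow> A (xop j f) = gsmult (a j) f - gsmult (if p then 1 else -1) (xop j (A f))"
    and a0: "\<not> p \<Longrightarrow> a = (\<lambda>_. 0)"
    using xnormalizer_xop[OF assms(1)] by blast
  obtain b where b: "\<And>j f. j < 3 \<Longrightarrow> X (xop j f) = gsmult (b j) f - gsmult (if q then 1 else -1) (xop j (X f))"
    and b0: "\<not> q \<Longrightarrow> b = (\<lambda>_. 0)"
    using xnormalizer_xop[OF assms(2)] by blast
  have "sbr (p \<noteq> q) True (sbr p q A X) (xop j) f = 0" if "j < 3" for j f
    using a[OF that] b[OF that] a0 b0
    by (cases p; cases q)
      (simp_all add: sbr_apply op_linear_diff[OF linA] op_linear_diff[OF linX]
        op_linear_gsmult[OF linA] op_linear_gsmult[OF linX] op_linear_minus[OF linA]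
        op_linear_minus[OF linX] op_linear_add[OF linA] op_linear_add[OF linX] xop_add xop_minus
        xop_diff)
  then show ?thesis
    unfolding xcentralizer_def xscalar_def
    using op_linear_sbr[OF linA linX] homog_sbr[OF linA linX hA hX] by simp
qed

lemma xnormalizer_square:
  assumes "A \<in> xnormalizer True"
  shows "A \<circ> A \<in> xcentralizer False"
proof -
  have linA: "op_linear A" and hA: "homog True A"
    using assms unfolding xnormalizer_def xscalar_def by auto
  obtain a where a: "\<And>j f. j < 3 \<Longrightarrow> A (xop j f) = gsmult (a j) f - xop j (A f)"
    using xnormalizer_xop[OF assms] by (metis gsmult_one)
  have "homog False (\<lambda>f. A (A f))" using homog_comp[OF linA hA hA] by simp
  then show ?thesis
    unfolding xcentralizer_def xscalar_def o_def
    using a op_linear_comp[OF linA linA]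
    by (simp add: sbr_apply op_linear_diff[OF linA] op_linear_gsmult[OF linA])
qed

lemma pivot_xscalar: "pivot n \<in> xscalar True (\<lambda>j. if j = n then 1 else 0)"
  unfolding xscalar_def by (simp add: op_linear_pivot homog_pivot sbr_apply pivot_xop)

lemma pivot_combination_xscalar: "(\<lambda>f. \<Sum>i<3. gsmult (c i) (pivot i f)) \<in> xscalar True c"
proof -
  have "(\<lambda>f. \<Sum>i<3. gsmult (c i) (pivot i f)) \<in> xscalar True (\<lambda>j. \<Sum>i<3. c i * (if j = i then 1 else 0))"
    using xscalar_smult[OF pivot_xscalar, unfolded op_smult_def]
    by (intro xscalar_sum[where A = "\<lambda>i. op_smult (c i) (pivot i)", unfolded op_smult_def]) auto
  also have "\<dots> = xscalar True c"
    by (rule xscalar_cong) (auto simp: numeral_3_eq_3 lessThan_Suc less_Suc_eq)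
  finally show ?thesis .
qed

lemma lie_closed_Qalg: "lie_closed Qalg"
  unfolding lie_closed_def Qalg_def lie_subsuper_def subspace_op_def by blast

lemma Qalg_minimal: "lie_subsuper L \<Longrightarrow> pivot 0 \<in> L \<Longrightarrow> pivot 1 \<in> L \<Longrightarrow> pivot 2 \<in> L \<Longrightarrow> Qalg \<subseteq> L"
  unfolding Qalg_def by blast

lemma pivot_in_Qalg_generator: "i < 3 \<Longrightarrow> pivot i \<in> Qalg"
  unfolding Qalg_def by (auto simp: less_Suc_eq numeral_3_eq_3 numeral_2_eq_2)

lemma Qalg_eq_graded_sum: "Qalg = graded_sum Qalg xnormalizer"
proof
  let ?U = "graded_sum Qalg xnormalizer"
  have "is_ideal ?U ?U"
    using lie_closed_Qalg graded_family_xnormalizer graded_family_xnormalizer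
  proof (rule is_ideal_graded_sum)
    show "sbr p q A B \<in> xnormalizer (p \<noteq> q)" if "A \<in> Qalg \<inter> xnormalizer p" "B \<in> Qalg \<inter> xnormalizer q"
      for p q A B
      using that xnormalizer_sbr xcentralizer_subset_xnormalizer by blast
    show "B \<circ> B \<in> xnormalizer False" if "B \<in> Qalg \<inter> xnormalizer True" for B
      using that xnormalizer_square xcentralizer_subset_xnormalizer by blast
  qed simp
  moreover have generators: "pivot i \<in> ?U" if "i < 3" for i
    using pivot_xscalar[of i] pivot_in_Qalg_generator[OF that]
    by (intro graded_sumI[OF lie_closed_Qalg graded_family_xnormalizer, of _ True])
      (auto simp: xnormalizer_def)
  ultimately show "Qalg \<subseteq> ?U"
    using generators[of 0] generators[of 1] generators[of 2]
    by (intro Qalg_minimal lie_subsuper_if_self_ideal) simp_all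
  show "?U \<subseteq> Qalg" by (rule graded_sum_subset[OF lie_closed_Qalg])
qed

lemma Qalg_homog_xnormalizer: "A \<in> Qalg \<Longrightarrow> homog p A \<Longrightarrow> A \<in> xnormalizer p"
  using graded_sum_homogD[OF graded_family_xnormalizer] Qalg_eq_graded_sum by blast

lemma pivot_in_Qalg: "pivot n \<in> (Qalg :: 'k::field gop set)"
proof (induction n rule: less_induct)
  case (less n)
  show ?case
  proof (cases "n < 3")
    case True
    then show ?thesis by (rule pivot_in_Qalg_generator)
  next
    case False
    then obtain m where n: "n = m + 3" by (metis add.commute le_Suc_ex not_less)
    then have Qm: "pivot m \<in> (Qalg :: 'k gop set)" "pivot (Suc m) \<in> (Qalg :: 'k gop set)"
      using less.IH[of m] less.IH[of "Suc m"] by simp_all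
    have "sbr True True (pivot m) (pivot (Suc m)) \<in> (Qalg :: 'k gop set)"
      by (rule lie_closed_sbr[OF lie_closed_Qalg Qm homog_pivot homog_pivot])
    then have "op_smult (-1) (sbr True True (pivot m) (pivot (Suc m))) \<in> (Qalg :: 'k gop set)"
      by (rule lie_closed_op_smult[OF lie_closed_Qalg])
    also have "op_smult (-1) (sbr True True (pivot m) (pivot (Suc m))) = (\<lambda>f. xop m (pivot (m + 3) f))"
      by (rule ext) (simp add: op_smult_def sbr_apply pivot_anticomm_Suc)
    finally have xv: "(\<lambda>f. xop m (pivot (m + 3) f)) \<in> (Qalg :: 'k gop set)" .
    have "homog False (\<lambda>f. xop m (pivot (m + 3) f :: 'k grass))"
      using homog_comp[OF op_linear_xop homog_xop homog_pivot] by simp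
    then have "sbr True False (pivot m) (\<lambda>f. xop m (pivot (m + 3) f)) \<in> (Qalg :: 'k gop set)"
      by (rule lie_closed_sbr[OF lie_closed_Qalg Qm(1) xv homog_pivot])
    also have "sbr True False (pivot m) (\<lambda>f. xop m (pivot (m + 3) f)) = pivot n"
      by (rule ext) (simp add: sbr_apply pivot_comm_xop_pivot n)
    finally show ?thesis .
  qed
qed

section \<open>The ideal J of elements supercommuting with x_0, x_1, x_2\<close>

lemma is_ideal_Qalg_xcentralizer: "is_ideal Qalg (graded_sum Qalg xcentralizer)"
proof -
  have "is_ideal (graded_sum Qalg xnormalizer) (graded_sum Qalg xcentralizer)"
    using lie_closed_Qalg graded_family_xnormalizer graded_family_xcentralizer
      xcentralizer_subset_xnormalizer
  proof (rule is_ideal_graded_sum)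
    show "sbr p q A B \<in> xcentralizer (p \<noteq> q)"
      if "A \<in> Qalg \<inter> xnormalizer p" "B \<in> Qalg \<inter> xcentralizer q" for p q A B
      using that xnormalizer_sbr xcentralizer_subset_xnormalizer by blast
    show "B \<circ> B \<in> xcentralizer False" if "B \<in> Qalg \<inter> xcentralizer True" for B
      using that xnormalizer_square xcentralizer_subset_xnormalizer by blast
  qed
  then show ?thesis by (simp only: Qalg_eq_graded_sum[symmetric])
qed

lemma fin_codim_Qalg_xcentralizer: "fin_codim Qalg (graded_sum Qalg xcentralizer)"
  unfolding fin_codim_def
proof (intro exI conjI)
  let ?F = "pivot ` {..<3}"
  show "finite ?F" by simp
  show "?F \<subseteq> Qalg" using pivot_in_Qalg by blast
  show "Qalg \<subseteq> {op_add B D | B D. B \<in> graded_sum Qalg xcentralizer \<and> D \<in> op_span ?F}"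
  proof
    fix A assume "A \<in> Qalg"
    then have "A \<in> graded_sum Qalg xnormalizer" by (simp only: Qalg_eq_graded_sum[symmetric])
    then obtain B C where A: "A = op_add B C" "B \<in> Qalg \<inter> xcentralizer False" "C \<in> Qalg \<inter> xnormalizer True"
      unfolding graded_sum_def xnormalizer_even by blast
    then obtain c where C: "C \<in> xscalar True c" unfolding xnormalizer_def by blast
    \<comment> \<open>Subtracting \<open>\<Sum>i<3. c i v_i\<close> removes the scalar supercommutators of the odd part.\<close>
    define D where "D = (\<lambda>f. \<Sum>i<3. gsmult (c i) (pivot i f))"
    have D_span: "D \<in> op_span ?F" unfolding D_def by (rule op_span_sum) auto
    then have "D \<in> Qalg" using lie_closed_op_span[OF lie_closed_Qalg] pivot_in_Qalg by blast
    then have "op_add C (op_smult (-1) D) \<in> Qalg"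
      using A(3) by (simp add: lie_closed_op_add[OF lie_closed_Qalg] lie_closed_op_smult[OF lie_closed_Qalg])
    moreover have "op_add C (op_smult (-1) D) \<in> xscalar True (\<lambda>j. c j + -1 * c j)"
      using C pivot_combination_xscalar[of c] unfolding D_def by (intro xscalar_add xscalar_smult)
    moreover have "xscalar True (\<lambda>j. c j + -1 * c j) = xcentralizer True"
      unfolding xcentralizer_def by (rule xscalar_cong) simp
    ultimately have "op_add B (op_add C (op_smult (-1) D)) \<in> graded_sum Qalg xcentralizer"
      using A(2) unfolding graded_sum_def by blast
    moreover have "A = op_add (op_add B (op_add C (op_smult (-1) D))) D"
      unfolding A(1) op_add_def op_smult_def by simp
    ultimately show "A \<in> {op_add B D | B D. B \<in> graded_sum Qalg xcentralizer \<and> D \<in> op_span ?F}"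
      using D_span by blast
  qed
qed

lemma pivot_in_Qalg_xcentralizer:
  assumes "3 \<le> n"
  shows "pivot n \<in> graded_sum Qalg xcentralizer"
proof (rule graded_sumI[OF lie_closed_Qalg graded_family_xcentralizer pivot_in_Qalg])
  have "xscalar True (\<lambda>j. if j = n then 1 else 0) = xcentralizer True"
    unfolding xcentralizer_def using assms by (intro xscalar_cong) simp
  then show "pivot n \<in> xcentralizer True" using pivot_xscalar by blast
qed

section \<open>The ideal I of elements of J with values in x_0 x_1 x_2 \<Lambda>\<close>

definition x012_multiples :: "'k::field grass set" where
  "x012_multiples = {g. \<forall>S. Poly_Mapping.lookup g S \<noteq> 0 \<longrightarrow> 0 |\<in>| S \<and> 1 |\<in>| S \<and> 2 |\<in>| S}"

definition x012_centralizer :: "bool \<Rightarrow> 'k::field gop set" where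
  "x012_centralizer p = {A \<in> xcentralizer p. \<forall>f. A f \<in> x012_multiples}"

lemma x012_multiples_zero: "0 \<in> x012_multiples"
  unfolding x012_multiples_def by simp

lemma x012_multiples_gsmult: "g \<in> x012_multiples \<Longrightarrow> gsmult c g \<in> x012_multiples"
  unfolding x012_multiples_def by simp

lemma x012_multiples_uminus: "g \<in> x012_multiples \<Longrightarrow> - g \<in> x012_multiples"
  unfolding x012_multiples_def by simp

lemma x012_multiples_lookup_fempty: "g \<in> x012_multiples \<Longrightarrow> Poly_Mapping.lookup g {||} = 0"
  unfolding x012_multiples_def by blast

lemma x012_multiples_add: "f \<in> x012_multiples \<Longrightarrow> g \<in> x012_multiples \<Longrightarrow> f + g \<in> x012_multiples"
  unfolding x012_multiples_def mem_Collect_eq by (metis add.right_neutral add_0 lookup_add)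

lemma xop_012_in_x012_multiples: "xop 0 (xop 1 (xop 2 h)) \<in> x012_multiples"
  unfolding x012_multiples_def
proof (intro CollectI allI impI)
  fix S assume "Poly_Mapping.lookup (xop 0 (xop 1 (xop 2 h))) S \<noteq> 0"
  then obtain T1 where T1: "Poly_Mapping.lookup (xop 1 (xop 2 h)) T1 \<noteq> 0" "S = finsert 0 T1"
    by (rule xop_lookup_nonzero)
  from T1(1) obtain T2 where T2: "Poly_Mapping.lookup (xop 2 h) T2 \<noteq> 0" "T1 = finsert 1 T2"
    by (rule xop_lookup_nonzero)
  from T2(1) obtain T3 where "T2 = finsert 2 T3"
    by (rule xop_lookup_nonzero)
  with T1(2) T2(2) show "0 |\<in>| S \<and> 1 |\<in>| S \<and> 2 |\<in>| S" by simp
qed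

lemma xop_dop_cancel:
  assumes "\<And>S. Poly_Mapping.lookup g S \<noteq> 0 \<Longrightarrow> j |\<in>| S"
  shows "xop j (dop j g) = g"
proof (rule trans[OF op_linear_expand[OF op_linear_comp[OF op_linear_xop op_linear_dop]]])
  have cancel: "xop j (dop j (gmono T)) = gmono T" if "j |\<in>| T" for T
  proof -
    have "finsert j (T |-| {|j|}) = T" using that by auto
    with that show ?thesis by (simp add: dop_gmono xop_gsmult xop_gmono)
  qed
  then have "(\<Sum>T\<in>Poly_Mapping.keys g. gsmult (Poly_Mapping.lookup g T) (xop j (dop j (gmono T))))
      = (\<Sum>T\<in>Poly_Mapping.keys g. gsmult (Poly_Mapping.lookup g T) (gmono T))"
    by (intro sum.cong refl) (simp add: cancel assms in_keys_iff)
  then show "(\<Sum>T\<in>Poly_Mapping.keys g. gsmult (Poly_Mapping.lookup g T) (xop j (dop j (gmono T)))) = g"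
    using grass_expand[of g] by simp
qed

lemma x012_multiples_factor:
  assumes "g \<in> x012_multiples"
  obtains h where "g = xop 0 (xop 1 (xop 2 h))"
proof -
  have g: "\<And>S. Poly_Mapping.lookup g S \<noteq> 0 \<Longrightarrow> 0 |\<in>| S \<and> 1 |\<in>| S \<and> 2 |\<in>| S"
    using assms unfolding x012_multiples_def by blast
  have dop_keeps: "Poly_Mapping.lookup (dop j f) S \<noteq> 0 \<Longrightarrow> \<exists>T. Poly_Mapping.lookup f T \<noteq> 0 \<and> S = T |-| {|j|}"
    for j f S by (metis dop_lookup_nonzero)
  define g1 where "g1 = dop 0 g"
  define g2 where "g2 = dop 1 g1"
  have g1: "\<And>S. Poly_Mapping.lookup g1 S \<noteq> 0 \<Longrightarrow> 1 |\<in>| S \<and> 2 |\<in>| S"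
    unfolding g1_def using g dop_keeps by fastforce
  have g2: "\<And>S. Poly_Mapping.lookup g2 S \<noteq> 0 \<Longrightarrow> 2 |\<in>| S"
    unfolding g2_def using g1 dop_keeps by fastforce
  have "g = xop 0 g1" unfolding g1_def by (rule xop_dop_cancel[symmetric]) (use g in blast)
  also have "g1 = xop 1 g2" unfolding g2_def by (rule xop_dop_cancel[symmetric]) (use g1 in blast)
  also have "g2 = xop 2 (dop 2 g2)" by (rule xop_dop_cancel[symmetric]) (use g2 in blast)
  finally show thesis by (rule that)
qed

lemma xcentralizer_x012_multiples:
  assumes "A \<in> xcentralizer p" "g \<in> x012_multiples"
  shows "A g \<in> x012_multiples"
proof -
  obtain h where h: "g = xop 0 (xop 1 (xop 2 h))" using assms(2) by (rule x012_multiples_factor)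
  have A: "A (xop j f) = gsmult (if p then -1 else 1) (xop j (A f))" if "j < 3" for j f
    using xscalar_xop[OF assms(1)[unfolded xcentralizer_def] that] by (cases p) simp_all
  show ?thesis
    using xop_012_in_x012_multiples[of "A h"]
    by (cases p) (simp_all add: h A xop_minus x012_multiples_uminus)
qed

lemma graded_family_x012_centralizer: "graded_family x012_centralizer"
  using graded_family_xcentralizer
  unfolding graded_family_def subspace_op_def x012_centralizer_def
  by (auto simp: op_zero_apply op_add_apply op_smult_apply x012_multiples_zero
      x012_multiples_add x012_multiples_gsmult)

lemma is_ideal_x012_centralizer:
  "is_ideal (graded_sum (Qalg :: 'k::field gop set) xcentralizer) (graded_sum Qalg x012_centralizer)"
  using lie_closed_Qalg graded_family_xcentralizer graded_family_x012_centralizer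
proof (rule is_ideal_graded_sum)
  show "x012_centralizer p \<subseteq> xcentralizer p" for p
    unfolding x012_centralizer_def by blast
next
  fix p q and A B :: "'k gop"
  assume A: "A \<in> Qalg \<inter> xcentralizer p" and B: "B \<in> Qalg \<inter> x012_centralizer q"
  then have "sbr p q A B \<in> xcentralizer (p \<noteq> q)"
    using xnormalizer_sbr xcentralizer_subset_xnormalizer unfolding x012_centralizer_def by blast
  moreover have "sbr p q A B f \<in> x012_multiples" for f
  proof -
    have "B g \<in> x012_multiples" for g using B unfolding x012_centralizer_def by blast
    moreover from this have "A (B f) \<in> x012_multiples"
      using A xcentralizer_x012_multiples by blast
    ultimately show ?thesis
      unfolding sbr_apply by (intro x012_multiples_add x012_multiples_gsmult)
  qed
  ultimately show "sbr p q A B \<in> x012_centralizer (p \<noteq> q)"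
    unfolding x012_centralizer_def by blast
next
  fix B assume "B \<in> Qalg \<inter> x012_centralizer True"
  then show "B \<circ> B \<in> x012_centralizer False"
    using xnormalizer_square xcentralizer_subset_xnormalizer
    unfolding x012_centralizer_def by auto
qed

definition bracket_v0v1v1 :: "'k::field gop" where
  "bracket_v0v1v1 = sbr False True (sbr True True (pivot 0) (pivot 1)) (pivot 1)"

lemma bracket_v0v1v1_eq: "bracket_v0v1v1 f = xop 0 (xop 1 (xop 2 (xop 3 (pivot 6 f))))"
proof -
  have "bracket_v0v1v1 f = - xop 0 (pivot 1 (pivot 3 f) + pivot 3 (pivot 1 f))"
    unfolding bracket_v0v1v1_def sbr_apply
    by (simp add: pivot_anticomm_Suc[of 0, simplified] pivot_minus pivot_xop_ne xop_add xop_minus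
        add.commute)
  also have "\<dots> = xop 0 (xop 1 (xop 2 (xop 3 (pivot 6 f))))"
    unfolding pivot_anticomm_1_3 by (simp add: xop_minus)
  finally show ?thesis .
qed

lemma bracket_v0v1v1_in_x012_centralizer: "bracket_v0v1v1 \<in> graded_sum Qalg x012_centralizer"
proof -
  have w: "sbr True True (pivot 0) (pivot 1) \<in> Qalg" "homog False (sbr True True (pivot 0) (pivot 1))"
    using lie_closed_sbr[OF lie_closed_Qalg pivot_in_Qalg pivot_in_Qalg homog_pivot homog_pivot]
      homog_sbr[OF op_linear_pivot op_linear_pivot homog_pivot homog_pivot] by simp_all
  have Q: "bracket_v0v1v1 \<in> Qalg"
    unfolding bracket_v0v1v1_def by (rule lie_closed_sbr[OF lie_closed_Qalg w(1) pivot_in_Qalg w(2) homog_pivot])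
  have "bracket_v0v1v1 \<in> xcentralizer True"
    unfolding bracket_v0v1v1_def
    using xnormalizer_sbr[OF Qalg_homog_xnormalizer[OF w] Qalg_homog_xnormalizer[OF pivot_in_Qalg homog_pivot]]
    by simp
  moreover have "bracket_v0v1v1 f \<in> x012_multiples" for f
    by (simp only: bracket_v0v1v1_eq xop_012_in_x012_multiples)
  ultimately have "bracket_v0v1v1 \<in> x012_centralizer True"
    unfolding x012_centralizer_def by blast
  with Q show ?thesis by (rule graded_sumI[OF lie_closed_Qalg graded_family_x012_centralizer])
qed

lemma bracket_v0v1v1_nonzero: "bracket_v0v1v1 \<noteq> (op_zero :: 'k::field gop)"
proof
  have "pivot 6 (gmono {||}) = (0 :: 'k grass)"
    by (rule pivot_eq_0_if_supp_below[of 0]) (auto simp: supp_below_def lookup_gmono)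
  then have "pivot 6 (xop 6 (gmono {||})) = (gmono {||} :: 'k grass)"
    by (simp add: pivot_xop)
  moreover have "xop 6 (gmono {||}) = (gmono {|6|} :: 'k grass)" by (simp add: xop_gmono gsign_def)
  ultimately have "pivot 6 (gmono {|6|}) = (gmono {||} :: 'k grass)" by simp
  then have "Poly_Mapping.lookup (bracket_v0v1v1 (gmono {|6|}) :: 'k grass) {|0, 1, 2, 3|} \<noteq> 0"
    by (simp add: bracket_v0v1v1_eq xop_gmono xop_gsmult gsign_def lookup_gmono)
  moreover assume "bracket_v0v1v1 = (op_zero :: 'k gop)"
  ultimately show False by (simp add: op_zero_apply)
qed

section \<open>Infinite codimension\<close>

lemma sum_fun_apply: "(\<Sum>a\<in>A. f a) x = (\<Sum>a\<in>A. f a x)"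
  by (induction A rule: infinite_finite_induct) auto

interpretation fun_vector_space: vector_space "\<lambda>(c::'k::field) (f::'a \<Rightarrow> 'k) x. c * f x"
  by unfold_locales (auto simp: fun_eq_iff algebra_simps)

lemma independent_unit_vectors:
  assumes "finite N"
  shows "fun_vector_space.independent ((\<lambda>n m. if m = n then 1 else 0 :: 'k::field) ` N)"
proof
  let ?e = "\<lambda>n m. if m = n then 1 else 0 :: 'k"
  have inj: "inj_on ?e N"
    by (rule inj_onI) (metis zero_neq_one)
  assume "fun_vector_space.dependent (?e ` N)"
  then obtain u where u: "\<exists>w\<in>?e ` N. u w \<noteq> 0" "(\<Sum>w\<in>?e ` N. (\<lambda>m. u w * w m)) = 0"
    using fun_vector_space.dependent_finite[of "?e ` N"] assms by auto
  have "u (?e n) = 0" if "n \<in> N" for n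
  proof -
    have "0 = (\<Sum>w\<in>?e ` N. u w * w n)" using fun_cong[OF u(2), of n] by (simp add: sum_fun_apply)
    also have "\<dots> = (\<Sum>i\<in>N. u (?e i) * ?e i n)" by (simp add: sum.reindex[OF inj])
    also have "\<dots> = (\<Sum>i\<in>N. if i = n then u (?e n) else 0)" by (rule sum.cong) auto
    also have "\<dots> = u (?e n)" using that assms by simp
    finally show ?thesis by simp
  qed
  then show False using u(1) by blast
qed

lemma unit_vectors_not_in_finite_span:
  fixes v :: "'a \<Rightarrow> nat \<Rightarrow> 'k::field"
  assumes "finite F"
  shows "\<exists>n\<ge>k. \<forall>c. (\<lambda>m. if m = n then 1 else 0) \<noteq> (\<lambda>m. \<Sum>a\<in>F. c a * v a m)"
proof (rule ccontr)
  let ?e = "\<lambda>n m. if m = n then 1 else 0 :: 'k"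
  let ?N = "{k..<k + card F + 1}"
  assume contra: "\<not> ?thesis"
  have "?e n \<in> fun_vector_space.span (v ` F)" if n: "n \<in> ?N" for n
  proof -
    obtain c where "?e n = (\<lambda>m. \<Sum>a\<in>F. c a * v a m)" using contra n by auto
    also have "\<dots> = (\<Sum>a\<in>F. (\<lambda>m. c a * v a m))" by (rule ext) (simp add: sum_fun_apply)
    also have "\<dots> \<in> fun_vector_space.span (v ` F)"
      by (intro fun_vector_space.span_sum fun_vector_space.span_scale fun_vector_space.span_base) simp
    finally show ?thesis .
  qed
  then have "?e ` ?N \<subseteq> fun_vector_space.span (v ` F)" by blast
  then have "card (?e ` ?N) \<le> card (v ` F)"
    using fun_vector_space.independent_span_bound[OF finite_imageI[OF assms]]
      independent_unit_vectors[of ?N] by blast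
  also have "\<dots> \<le> card F" by (rule card_image_le[OF assms])
  finally show False
    using card_image[of ?e ?N] by (simp add: inj_on_def) (metis zero_neq_one)
qed

lemma not_fin_codim_x012_centralizer:
  "\<not> fin_codim (graded_sum (Qalg :: 'k::field gop set) xcentralizer) (graded_sum Qalg x012_centralizer)"
proof
  assume "fin_codim (graded_sum (Qalg :: 'k gop set) xcentralizer) (graded_sum Qalg x012_centralizer)"
  then obtain F :: "'k gop set" where F: "finite F"
    "graded_sum Qalg xcentralizer \<subseteq> {op_add B C | B C. B \<in> graded_sum Qalg x012_centralizer \<and> C \<in> op_span F}"
    unfolding fin_codim_def by blast
  define psi :: "'k gop \<Rightarrow> nat \<Rightarrow> 'k" where "psi A m = Poly_Mapping.lookup (A (gmono {|m|})) {||}" for A m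
  obtain n where "3 \<le> n" and n: "\<And>c. (\<lambda>m. if m = n then 1 else 0) \<noteq> (\<lambda>m. \<Sum>A\<in>F. c A * psi A m)"
    using unit_vectors_not_in_finite_span[OF F(1), of 3 psi] by blast
  obtain B C where BC: "pivot n = op_add B C" "B \<in> graded_sum Qalg x012_centralizer" "C \<in> op_span F"
    using F(2) pivot_in_Qalg_xcentralizer[OF \<open>3 \<le> n\<close>] by blast
  obtain G c where C: "C = (\<lambda>f. \<Sum>A\<in>G. gsmult (c A) (A f))" "finite G" "G \<subseteq> F"
    using BC(3) unfolding op_span_def by blast
  obtain B0 B1 where "B = op_add B0 B1" "B0 \<in> x012_centralizer False" "B1 \<in> x012_centralizer True"
    using BC(2) unfolding graded_sum_def by blast
  then have "B f \<in> x012_multiples" for f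
    unfolding x012_centralizer_def by (simp add: op_add_apply x012_multiples_add)
  then have "psi B m = 0" for m
    unfolding psi_def by (rule x012_multiples_lookup_fempty)
  moreover have "psi C m = (\<Sum>A\<in>F. (if A \<in> G then c A else 0) * psi A m)" for m
  proof -
    have "psi C m = (\<Sum>A\<in>G. c A * psi A m)"
      unfolding psi_def C(1) by (simp add: lookup_sum)
    also have "\<dots> = (\<Sum>A\<in>F. (if A \<in> G then c A else 0) * psi A m)"
      using C(3) F(1) by (intro sum.mono_neutral_cong_left) auto
    finally show ?thesis .
  qed
  moreover have "psi (pivot n) m = psi B m + psi C m" for m
    unfolding psi_def BC(1) by (simp add: op_add_apply lookup_add)
  ultimately have "(\<lambda>m. if m = n then 1 else 0) = (\<lambda>m. \<Sum>A\<in>F. (if A \<in> G then c A else 0) * psi A m)"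
    by (simp add: fun_eq_iff psi_def pivot_lookup_singleton)
  with n[of "\<lambda>A. if A \<in> G then c A else 0"] show False by simp
qed

theorem lemma7p5:
  shows "\<not> hereditary_just_infinite (Qalg :: 'k::field gop set) \<and>
    (\<exists>J. is_ideal (Qalg :: 'k gop set) J \<and> fin_codim Qalg J \<and>
       (\<exists>I. is_ideal J I \<and> I \<noteq> {op_zero} \<and> \<not> fin_codim J I))"
proof -
  let ?J = "graded_sum (Qalg :: 'k gop set) xcentralizer"
  let ?I = "graded_sum (Qalg :: 'k gop set) x012_centralizer"
  have "?I \<noteq> {op_zero}" using bracket_v0v1v1_in_x012_centralizer bracket_v0v1v1_nonzero by blast
  then have I: "is_ideal ?J ?I \<and> ?I \<noteq> {op_zero} \<and> \<not> fin_codim ?J ?I"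
    using is_ideal_x012_centralizer not_fin_codim_x012_centralizer by blast
  then have "\<not> just_infinite ?J" unfolding just_infinite_def by blast
  then show ?thesis
    using is_ideal_Qalg_xcentralizer fin_codim_Qalg_xcentralizer I
    unfolding hereditary_just_infinite_def by blast
qed

end
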